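(* Let $\mathbb{X}$ be a finite-dimensional strictly convex real Banach space and $\mathbb{Y}$ a finite-dimensional smooth real Banach space (both of dimension greater than $1$). Let $T\in\mathbb{L}(\mathbb{X},\mathbb{Y})$ with $\|T\|=1$. Then $T$ is a smooth point of $\mathbb{L}(\mathbb{X},\mathbb{Y})$ if and only if for every $\epsilon>0$, $T$ admits a uniform $\epsilon$-BPB approximation $A\neq T$ which is itself a smooth point of $\mathbb{L}(\mathbb{X},\mathbb{Y})$.
   Context: $\mathbb{L}(\mathbb{X},\mathbb{Y})$ is the space of linear operators with the operator norm; $S_{\mathbb{X}}$ is the unit sphere. $\mathbb{X}$ is strictly convex if every point of $S_{\mathbb{X}}$ is an extreme point of the unit ball. A nonzero element $x$ of a Banach space $\mathbb{Z}$ is a smooth point if there is a unique $f\in\mathbb{Z}^*$ with $\|f\|=1$ and $f(x)=\|x\|$; $\mathbb{Y}$ is smooth if all its nonzero points are smooth. For $T$ with $\|T\|=1$ and fixed $\epsilon>0$, an operator $A\in\mathbb{L}(\mathbb{X},\mathbb{Y})$ with $\|A\|=1$ is a uniform $\epsilon$-BPB approximation of $T$ if there exists $\delta(\epsilon)>0$ such that whenever $x_0\in S_{\mathbb{X}}$ satisfies $\|Tx_0\|>1-\delta(\epsilon)$, there exists $u_0\in S_{\mathbb{X}}$ with $\|Au_0\|=1$, $\|u_0-x_0\|<\epsilon$ and $\|A-T\|<\epsilon$. *)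

theory Defs
  imports "HOL-Analysis.Analysis"
begin

definition fin_dim_space :: "'a::real_normed_vector itself \<Rightarrow> bool" where
  "fin_dim_space _ \<longleftrightarrow> (\<exists>B::'a set. finite B \<and> span B = UNIV)"

definition strictly_convex_space :: "'a::real_normed_vector itself \<Rightarrow> bool" where
  "strictly_convex_space _ \<longleftrightarrow> (\<forall>x::'a \<in> sphere 0 1. x extreme_point_of cball 0 1)"

definition smooth_point :: "'z::real_normed_vector \<Rightarrow> bool" where
  "smooth_point x \<longleftrightarrow> x \<noteq> 0 \<and>
     (\<exists>!f::'z \<Rightarrow>\<^sub>L real. norm f = 1 \<and> blinfun_apply f x = norm x)"

definition smooth_space :: "'a::real_normed_vector itself \<Rightarrow> bool" where
  "smooth_space _ \<longleftrightarrow> (\<forall>y::'a. y \<noteq> 0 \<longrightarrow> smooth_point y)"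

text \<open>Uniform epsilon-BPB approximation A of T (with norm T = 1 assumed separately).\<close>
definition uniform_BPB_approx ::
  "real \<Rightarrow> ('a::real_normed_vector \<Rightarrow>\<^sub>L 'b::real_normed_vector) \<Rightarrow> ('a \<Rightarrow>\<^sub>L 'b) \<Rightarrow> bool" where
  "uniform_BPB_approx \<epsilon> T A \<longleftrightarrow> norm A = 1 \<and>
     (\<exists>\<delta>>0. \<forall>x0 \<in> sphere 0 1. norm (T x0) > 1 - \<delta> \<longrightarrow>
        (\<exists>u0 \<in> sphere 0 1. norm (A u0) = 1 \<and> norm (u0 - x0) < \<epsilon> \<and> norm (A - T) < \<epsilon>))"

end

theory Submission
  imports Defs
begin

(* The unit sphere of the domain is compact, and a norm-one operator S is a smooth point of
   L(X,Y) exactly when its norming points form a single pair {u, -u}.  If S is smooth, testing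
   the support functionals V |-> g (V u) on a rank-one operator forces any two norming points to
   be equal up to sign, by strict convexity of X.  Conversely, if only +-u norm S, every support
   functional of S annihilates the operators vanishing at u (perturb S by such an operator: near
   +-u it is small, elsewhere S has room), hence it is V |-> g (V u) for the unique support
   functional g of the smooth point S u.

   For smooth T with norming points +-x0 and psi = g o T, the operator (1-t) T + t psi (x) T x0,
   or psi (x) w for a unit vector w near T x0 when T is itself of rank one, is smooth, close to T,
   and still norms x0; compactness then yields the uniform Bishop-Phelps-Bollobas property.
   Conversely, a smooth uniform BPB approximation has only two norming points +-u, and every
   norming point of T lies within epsilon of one of them, so T has only the norming points +-x0. *)

lemma scaled_infdist_le_norm:
  fixes M :: "'a::real_normed_vector set"
  assumes "subspace M" "y \<in> M"
  shows "\<bar>t\<bar> * infdist b M \<le> norm (y + t *\<^sub>R b)"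
proof (cases "t = 0")
  case False
  have "- (1 / t) *\<^sub>R y \<in> M"
    using assms by (simp add: subspace_scale subspace_neg)
  then have "infdist b M \<le> dist b (- (1 / t) *\<^sub>R y)"
    by (rule infdist_le)
  also have "\<dots> = norm (y + t *\<^sub>R b) / \<bar>t\<bar>"
  proof -
    have "b + (1 / t) *\<^sub>R y = (1 / t) *\<^sub>R (y + t *\<^sub>R b)"
      using False by (simp add: algebra_simps)
    then show ?thesis by (simp add: dist_norm)
  qed
  finally show ?thesis
    using False by (simp add: field_simps)
qed simp

lemma bounded_seq_in_finite_span_convergent_subseq:
  fixes B :: "'a::real_normed_vector set" and f :: "nat \<Rightarrow> 'a"
  assumes "finite B" "\<And>n. f n \<in> span B" "bounded (range f)"
  shows "\<exists>l\<in>span B. \<exists>r. strict_mono r \<and> (f \<circ> r) \<longlonglongrightarrow> l"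
  using assms
proof (induction B arbitrary: f rule: finite_induct)
  case (empty f)
  then have "f = (\<lambda>n. 0)" by auto
  then have "strict_mono id \<and> (f \<circ> id) \<longlonglongrightarrow> 0"
    by (simp add: strict_mono_id)
  then show ?case using span_zero by blast
next
  case (insert b B f)
  show ?case
  proof (cases "b \<in> span B")
    case True
    then show ?thesis using insert by (simp add: span_redundant)
  next
    case False
    have "closed (span B)"
    proof (rule closed_sequential_limits[THEN iffD2], intro allI impI, elim conjE)
      fix x l assume xB: "\<forall>n. x n \<in> span B" and xl: "x \<longlonglongrightarrow> l"
      obtain l' r where "l' \<in> span B" "strict_mono r" "(x \<circ> r) \<longlonglongrightarrow> l'"
        using insert.IH xB convergent_imp_bounded[OF xl] by blast
      moreover have "(x \<circ> r) \<longlonglongrightarrow> l" using xl \<open>strict_mono r\<close> by (rule LIMSEQ_subseq_LIMSEQ)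
      ultimately show "l \<in> span B" using LIMSEQ_unique by metis
    qed
    then have d: "infdist b (span B) > 0"
      using infdist_pos_not_in_closed False span_zero by blast
    obtain M where M: "\<And>n. norm (f n) \<le> M"
      using insert.prems(2) by (auto simp: bounded_iff)
    have "\<forall>n. \<exists>c. f n - c *\<^sub>R b \<in> span B"
      using insert.prems(1) span_breakdown_eq by blast
    then obtain t where t: "\<And>n. f n - t n *\<^sub>R b \<in> span B"
      by metis
    define y where "y n = f n - t n *\<^sub>R b" for n
    have t_bound: "\<bar>t n\<bar> \<le> M / infdist b (span B)" for n
      using scaled_infdist_le_norm[OF subspace_span t[of n], of "t n" b] M[of n] d
      by (simp add: field_simps)
    then have "bounded (range t)"
      by (auto simp: bounded_iff)
    then obtain \<tau> r1 where r1: "strict_mono r1" "(t \<circ> r1) \<longlonglongrightarrow> \<tau>"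
      using bounded_imp_convergent_subsequence by blast
    have "norm (y n) \<le> M + M / infdist b (span B) * norm b" for n
      using norm_triangle_ineq4[of "f n" "t n *\<^sub>R b"] M[of n]
        mult_right_mono[OF t_bound[of n] norm_ge_zero[of b]]
      by (simp add: y_def)
    then have "bounded (range (y \<circ> r1))"
      by (auto simp: bounded_iff)
    then obtain l r2 where r2: "l \<in> span B" "strict_mono r2" "(y \<circ> r1 \<circ> r2) \<longlonglongrightarrow> l"
      using insert.IH t by (metis comp_apply y_def)
    have "(t \<circ> r1 \<circ> r2) \<longlonglongrightarrow> \<tau>"
      using r1(2) r2(2) by (rule LIMSEQ_subseq_LIMSEQ)
    then have "(\<lambda>n. (y \<circ> r1 \<circ> r2) n + (t \<circ> r1 \<circ> r2) n *\<^sub>R b) \<longlonglongrightarrow> l + \<tau> *\<^sub>R b"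
      by (intro tendsto_intros r2(3))
    then have "(f \<circ> (r1 \<circ> r2)) \<longlonglongrightarrow> l + \<tau> *\<^sub>R b"
      by (simp add: y_def o_def)
    moreover have "l + \<tau> *\<^sub>R b \<in> span (insert b B)"
      using r2(1) by (meson span_add span_base span_mono span_scale insertI1 subset_insertI subsetD)
    ultimately show ?thesis
      using strict_mono_o[OF r1(1) r2(2)] by blast
  qed
qed

lemma compact_unit_sphere:
  assumes "fin_dim_space TYPE('a::real_normed_vector)"
  shows "compact (sphere (0::'a) 1)"
proof -
  obtain B :: "'a set" where B: "finite B" "span B = UNIV"
    using assms unfolding fin_dim_space_def by blast
  have "seq_compact (sphere (0::'a) 1)"
  proof (rule seq_compactI)
    fix f :: "nat \<Rightarrow> 'a" assume f: "\<forall>n. f n \<in> sphere 0 1"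
    then have "bounded (range f)"
      by (auto simp: bounded_iff)
    then obtain l r where "strict_mono r" "(f \<circ> r) \<longlonglongrightarrow> l"
      using bounded_seq_in_finite_span_convergent_subseq[OF B(1)] B(2) by blast
    moreover have "closed (sphere (0::'a) 1)"
      unfolding sphere_def by (intro closed_Collect_eq continuous_intros)
    then have "l \<in> sphere 0 1"
      by (rule closed_sequentially[of _ "f \<circ> r"])
        (use f \<open>(f \<circ> r) \<longlonglongrightarrow> l\<close> in auto)
    ultimately show "\<exists>l\<in>sphere 0 1. \<exists>r. strict_mono r \<and> (f \<circ> r) \<longlonglongrightarrow> l"
      by blast
  qed
  then show ?thesis
    by (simp add: compact_eq_seq_compact_metric)
qed

definition rank_one :: "('a::real_normed_vector \<Rightarrow>\<^sub>L real) \<Rightarrow> 'b::real_normed_vector \<Rightarrow> 'a \<Rightarrow>\<^sub>L 'b"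
  where "rank_one \<psi> y = blinfun_scaleR_left y o\<^sub>L \<psi>"

lemma rank_one_apply [simp]: "rank_one \<psi> y x = \<psi> x *\<^sub>R y"
  by (simp add: rank_one_def)

lemma norm_rank_one_le: "norm (rank_one \<psi> y) \<le> norm \<psi> * norm y"
proof (rule norm_blinfun_bound)
  show "norm (rank_one \<psi> y x) \<le> norm \<psi> * norm y * norm x" for x
    using mult_right_mono[OF norm_blinfun[of \<psi> x] norm_ge_zero[of y]]
    by (simp add: algebra_simps)
qed simp

lemma bounded_linear_rank_one: "bounded_linear (rank_one \<psi>)"
proof (rule bounded_linear_intro[of _ "norm \<psi>"])
  show "rank_one \<psi> (a + b) = rank_one \<psi> a + rank_one \<psi> b" for a b
    by (rule blinfun_eqI) (simp add: plus_blinfun.rep_eq scaleR_add_right)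
  show "rank_one \<psi> (r *\<^sub>R a) = r *\<^sub>R rank_one \<psi> a" for r a
    by (rule blinfun_eqI) (simp add: scaleR_blinfun.rep_eq)
  show "norm (rank_one \<psi> a) \<le> norm a * norm \<psi>" for a
    using norm_rank_one_le[of \<psi> a] by (simp add: mult.commute)
qed

lemma rank_one_diff: "rank_one \<psi> a - rank_one \<psi> b = rank_one \<psi> (a - b)"
  by (rule blinfun_eqI) (simp add: minus_blinfun.rep_eq scaleR_diff_right)

definition eval_functional ::
  "('b::real_normed_vector \<Rightarrow>\<^sub>L real) \<Rightarrow> 'a::real_normed_vector \<Rightarrow> ('a \<Rightarrow>\<^sub>L 'b) \<Rightarrow>\<^sub>L real"
  where "eval_functional g u = Blinfun (\<lambda>V::'a \<Rightarrow>\<^sub>L 'b. g (V u))"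

lemma eval_functional_apply [simp]: "eval_functional g u V = g (V u)"
  unfolding eval_functional_def
  by (subst bounded_linear_Blinfun_apply)
     (auto intro: bounded_linear_blinfun_apply blinfun.bounded_linear_left)

lemma norm_eval_functional_le: "norm (eval_functional g u) \<le> norm g * norm u"
proof (rule norm_blinfun_bound)
  show "norm (eval_functional g u V) \<le> norm g * norm u * norm V" for V
    using norm_blinfun[of g "V u"] mult_left_mono[OF norm_blinfun[of V u] norm_ge_zero[of g]]
    by (simp add: algebra_simps)
qed simp

lemma norm_blinfun_le_on_sphere:
  fixes W :: "'a::real_normed_vector \<Rightarrow>\<^sub>L 'b::real_normed_vector"
  assumes "\<And>x. x \<in> sphere 0 1 \<Longrightarrow> norm (W x) \<le> M" "0 \<le> M"
  shows "norm W \<le> M"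
proof (rule norm_blinfun_bound[OF assms(2)])
  fix x :: 'a
  show "norm (W x) \<le> M * norm x"
  proof (cases "x = 0")
    case False
    then have "norm (W ((1 / norm x) *\<^sub>R x)) \<le> M"
      by (intro assms(1)) simp
    then show ?thesis
      using False by (simp add: blinfun.scaleR_right field_simps)
  qed simp
qed

lemma norm_eq_1_if_attained:
  fixes F :: "'a::real_normed_vector \<Rightarrow>\<^sub>L 'b::real_normed_vector"
  assumes "norm F \<le> 1" "norm (F x) = 1" "norm x = 1"
  shows "norm F = 1"
  using norm_blinfun[of F x] assms by simp

definition norming_points :: "('a::real_normed_vector \<Rightarrow>\<^sub>L 'b::real_normed_vector) \<Rightarrow> 'a set"
  where "norming_points S = {x \<in> sphere 0 1. norm (S x) = norm S}"

lemma norming_points_nonempty: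
  fixes S :: "'a::real_normed_vector \<Rightarrow>\<^sub>L 'b::real_normed_vector"
  assumes "compact (sphere (0::'a) 1)" "sphere (0::'a) 1 \<noteq> {}"
  shows "norming_points S \<noteq> {}"
proof -
  have "continuous_on (sphere 0 1) (\<lambda>x. norm (S x))"
    by (intro continuous_intros)
  then obtain x where x: "x \<in> sphere 0 1" "\<And>y. y \<in> sphere 0 1 \<Longrightarrow> norm (S y) \<le> norm (S x)"
    using continuous_attains_sup[OF assms] by blast
  have "norm S \<le> norm (S x)"
    by (rule norm_blinfun_le_on_sphere) (use x in auto)
  moreover have "norm (S x) \<le> norm S"
    using norm_blinfun[of S x] x(1) by simp
  ultimately show ?thesis
    using x(1) by (auto simp: norming_points_def)
qed

lemma near_norming_points_close:
  fixes S :: "'a::real_normed_vector \<Rightarrow>\<^sub>L 'b::real_normed_vector"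
  assumes cpt: "compact (sphere (0::'a) 1)" and "norm S = 1"
    and norming: "norming_points S \<subseteq> {u, -u}" and "\<eta> > 0"
  shows "\<exists>\<rho>>0. \<forall>x\<in>sphere 0 1. norm (S x) > 1 - \<rho> \<longrightarrow> norm (x - u) < \<eta> \<or> norm (x + u) < \<eta>"
proof -
  define K where "K = sphere (0::'a) 1 \<inter> {x. \<eta> \<le> norm (x - u) \<and> \<eta> \<le> norm (x + u)}"
  have "compact K" unfolding K_def
    by (intro compact_Int_closed cpt closed_Collect_conj closed_Collect_le continuous_intros)
  show ?thesis
  proof (cases "K = {}")
    case True
    then show ?thesis
      by (intro exI[of _ 1]) (auto simp: K_def not_le)
  next
    case False
    have "continuous_on K (\<lambda>x. norm (S x))"
      by (intro continuous_intros)
    then obtain xm where xm: "xm \<in> K" "\<And>y. y \<in> K \<Longrightarrow> norm (S y) \<le> norm (S xm)"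
      using continuous_attains_sup[OF \<open>compact K\<close> False] by blast
    have "xm \<notin> norming_points S"
      using norming xm(1) \<open>\<eta> > 0\<close> by (auto simp: K_def)
    moreover have "norm (S xm) \<le> 1"
      using norm_blinfun[of S xm] xm(1) \<open>norm S = 1\<close> by (simp add: K_def)
    ultimately have "norm (S xm) < 1"
      using xm(1) \<open>norm S = 1\<close> by (auto simp: K_def norming_points_def)
    then show ?thesis
      using xm(2) by (intro exI[of _ "1 - norm (S xm)"]) (force simp: K_def not_le)
  qed
qed

lemma smooth_space_unique_support:
  fixes y :: "'b::real_normed_vector"
  assumes "smooth_space TYPE('b)" "norm y = 1"
  shows "\<exists>!g::'b \<Rightarrow>\<^sub>L real. norm g = 1 \<and> blinfun_apply g y = 1"
proof -
  have "smooth_point y"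
    using assms unfolding smooth_space_def by (metis norm_zero zero_neq_one)
  then show ?thesis
    using assms(2) by (simp add: smooth_point_def)
qed

lemma eval_functional_supports:
  fixes S :: "'a::real_normed_vector \<Rightarrow>\<^sub>L 'b::real_normed_vector" and g :: "'b \<Rightarrow>\<^sub>L real"
  assumes "norm S = 1" "u \<in> norming_points S" "norm g = 1" "g (S u) = 1"
  shows "norm (eval_functional g u) = 1" "eval_functional g u S = norm S"
proof -
  show "norm (eval_functional g u) = 1"
    by (rule norm_eq_1_if_attained[of _ S])
      (use assms norm_eval_functional_le[of g u] in \<open>auto simp: norming_points_def\<close>)
  show "eval_functional g u S = norm S"
    using assms by simp
qed

lemma strictly_convex_unique_support_point:
  fixes \<psi> :: "'a::real_normed_vector \<Rightarrow>\<^sub>L real"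
  assumes "strictly_convex_space TYPE('a)" "norm \<psi> \<le> 1"
    and "u1 \<in> sphere 0 1" "u2 \<in> sphere 0 1" "\<psi> u1 = 1" "\<psi> u2 = 1"
  shows "u1 = u2"
proof (rule ccontr)
  assume "u1 \<noteq> u2"
  define m where "m = midpoint u1 u2"
  have "\<psi> m = 1"
    using assms by (simp add: m_def midpoint_def blinfun.scaleR_right blinfun.add_right)
  then have "1 \<le> norm m"
    using norm_blinfun[of \<psi> m] assms(2) by (simp add: mult_left_le_one_le order_trans)
  moreover have "norm m \<le> 1"
    using norm_triangle_ineq[of u1 u2] assms(3,4) by (simp add: m_def midpoint_def)
  ultimately have "m extreme_point_of cball 0 1"
    using assms(1) unfolding strictly_convex_space_def by simp
  moreover have "m \<in> open_segment u1 u2"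
    using \<open>u1 \<noteq> u2\<close> by (simp add: m_def)
  ultimately show False
    using assms(3,4) unfolding extreme_point_of_def by auto
qed

lemma norming_points_subset_if_smooth_point:
  fixes S :: "'a::real_normed_vector \<Rightarrow>\<^sub>L 'b::real_normed_vector"
  assumes sc: "strictly_convex_space TYPE('a)" and sy: "smooth_space TYPE('b)"
    and smooth: "smooth_point S" and nS: "norm S = 1" and u: "u \<in> norming_points S"
  shows "norming_points S \<subseteq> {u, -u}"
proof
  fix u' assume u': "u' \<in> norming_points S"
  have unit: "norm u = 1" "norm (S u) = 1" "norm u' = 1" "norm (S u') = 1"
    using u u' nS by (auto simp: norming_points_def)
  obtain g1 :: "'b \<Rightarrow>\<^sub>L real" where g1: "norm g1 = 1" "g1 (S u) = 1"
    using smooth_space_unique_support[OF sy unit(2)] by blast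
  obtain g2 :: "'b \<Rightarrow>\<^sub>L real" where g2: "norm g2 = 1" "g2 (S u') = 1"
    using smooth_space_unique_support[OF sy unit(4)] by blast
  have "eval_functional g1 u = eval_functional g2 u'"
    using smooth eval_functional_supports[OF nS u g1] eval_functional_supports[OF nS u' g2]
    unfolding smooth_point_def by blast
  define \<psi> where "\<psi> = g1 o\<^sub>L S"
  have n\<psi>: "norm \<psi> \<le> 1"
    using norm_blinfun_compose[of g1 S] g1 nS by (simp add: \<psi>_def)
  have \<psi>u: "\<psi> u = 1"
    using g1 by (simp add: \<psi>_def)
  txt \<open>Test both evaluation functionals on the rank-one operator built from \<open>\<psi>\<close>.\<close>
  have "eval_functional g1 u (rank_one \<psi> (S u)) = 1"
    using g1 \<psi>u by (simp add: blinfun.scaleR_right)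
  then have "\<psi> u' * g2 (S u) = 1"
    using \<open>eval_functional g1 u = _\<close> by (simp add: blinfun.scaleR_right)
  then have "1 = \<bar>\<psi> u'\<bar> * \<bar>g2 (S u)\<bar>"
    by (metis abs_mult abs_one)
  also have "\<dots> \<le> \<bar>\<psi> u'\<bar>"
    using norm_blinfun[of g2 "S u"] g2 unit by (intro mult_left_le) auto
  finally have "\<bar>\<psi> u'\<bar> = 1"
    using norm_blinfun[of \<psi> u'] n\<psi> unit by (simp add: mult_left_le_one_le order_trans)
  then consider "\<psi> u' = 1" | "\<psi> (- u') = 1"
    by (cases "\<psi> u' \<ge> 0") (auto simp: blinfun.minus_right)
  then show "u' \<in> {u, -u}"
  proof cases
    case 1
    then show ?thesis
      using strictly_convex_unique_support_point[OF sc n\<psi> _ _ \<psi>u, of u'] unit by simp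
  next
    case 2
    then show ?thesis
      using strictly_convex_unique_support_point[OF sc n\<psi> _ _ \<psi>u, of "- u'"] unit by auto
  qed
qed

lemma norm_perturbation_vanishing_at_norming_point:
  fixes S V :: "'a::real_normed_vector \<Rightarrow>\<^sub>L 'b::real_normed_vector"
  assumes cpt: "compact (sphere (0::'a) 1)" and nS: "norm S = 1"
    and norming: "norming_points S \<subseteq> {u, -u}" and Vu: "V u = 0" and "\<eta> > 0"
  shows "\<exists>h>0. norm (S + h *\<^sub>R V) \<le> 1 + h * \<eta>"
proof -
  define K where "K = norm V + 1"
  have "K > 0" by (simp add: K_def add_nonneg_pos)
  obtain \<rho> where "\<rho> > 0" and \<rho>:
    "\<And>x. x \<in> sphere 0 1 \<Longrightarrow> norm (S x) > 1 - \<rho> \<Longrightarrow> norm (x - u) < \<eta> / K \<or> norm (x + u) < \<eta> / K"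
    using near_norming_points_close[OF cpt nS norming, of "\<eta> / K"] \<open>\<eta> > 0\<close> \<open>K > 0\<close> by auto
  define h where "h = \<rho> / K"
  have "h > 0" "h * K = \<rho>"
    using \<open>\<rho> > 0\<close> \<open>K > 0\<close> by (auto simp: h_def)
  have "norm (S + h *\<^sub>R V) \<le> 1 + h * \<eta>"
  proof (rule norm_blinfun_le_on_sphere)
    fix x :: 'a assume x: "x \<in> sphere 0 1"
    have tri: "norm ((S + h *\<^sub>R V) x) \<le> norm (S x) + h * norm (V x)"
      using norm_triangle_ineq[of "S x" "h *\<^sub>R V x"] \<open>h > 0\<close>
      by (simp add: plus_blinfun.rep_eq scaleR_blinfun.rep_eq)
    show "norm ((S + h *\<^sub>R V) x) \<le> 1 + h * \<eta>"
    proof (cases "norm (S x) > 1 - \<rho>")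
      case True
      txt \<open>Since \<open>V\<close> vanishes at \<open>\<plusminus>u\<close>, it is small near them.\<close>
      have "V x = V (x - u)" "V x = V (x + u)"
        using Vu by (simp_all add: blinfun.diff_right blinfun.add_right)
      then have "norm (V x) \<le> norm V * min (norm (x - u)) (norm (x + u))"
        using norm_blinfun[of V "x - u"] norm_blinfun[of V "x + u"] by (simp add: min_def)
      also have "\<dots> \<le> norm V * (\<eta> / K)"
        using \<rho>[OF x True] by (intro mult_left_mono) auto
      also have "\<dots> \<le> \<eta>"
        using \<open>\<eta> > 0\<close> \<open>K > 0\<close> by (simp add: K_def field_simps)
      finally have "norm (V x) \<le> \<eta>" .
      then have "h * norm (V x) \<le> h * \<eta>"
        using \<open>h > 0\<close> by (simp add: mult_left_mono)
      then show ?thesis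
        using tri norm_blinfun[of S x] nS x by simp
    next
      case False
      have "norm (V x) \<le> K"
        using norm_blinfun[of V x] x by (simp add: K_def)
      then have "h * norm (V x) \<le> h * K"
        using \<open>h > 0\<close> by (simp add: mult_left_mono)
      then show ?thesis
        using tri False \<open>h * K = \<rho>\<close> mult_pos_pos[OF \<open>h > 0\<close> \<open>\<eta> > 0\<close>] by simp
    qed
  qed (use \<open>h > 0\<close> \<open>\<eta> > 0\<close> in simp)
  then show ?thesis
    using \<open>h > 0\<close> by blast
qed

lemma support_functional_vanishes:
  fixes S V :: "'a::real_normed_vector \<Rightarrow>\<^sub>L 'b::real_normed_vector"
    and G :: "('a \<Rightarrow>\<^sub>L 'b) \<Rightarrow>\<^sub>L real"
  assumes cpt: "compact (sphere (0::'a) 1)" and nS: "norm S = 1"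
    and norming: "norming_points S \<subseteq> {u, -u}"
    and G: "norm G = 1" "G S = 1" and Vu: "V u = 0"
  shows "G V = 0"
proof -
  have nonpos: "G W \<le> 0" if Wu: "W u = 0" for W :: "'a \<Rightarrow>\<^sub>L 'b"
  proof (rule ccontr)
    assume "\<not> G W \<le> 0"
    then obtain h where "h > 0" and h: "norm (S + h *\<^sub>R W) \<le> 1 + h * (G W / 2)"
      using norm_perturbation_vanishing_at_norming_point[OF cpt nS norming Wu, of "G W / 2"]
      by auto
    have "1 + h * G W = G (S + h *\<^sub>R W)"
      using G by (simp add: blinfun.add_right blinfun.scaleR_right)
    also have "\<dots> \<le> norm (S + h *\<^sub>R W)"
      using norm_blinfun[of G "S + h *\<^sub>R W"] G by simp
    finally have "1 + h * G W \<le> norm (S + h *\<^sub>R W)" .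
    moreover have "h * G W > 0"
      using \<open>h > 0\<close> \<open>\<not> G W \<le> 0\<close> by simp
    ultimately show False
      using h by linarith
  qed
  have "G (- V) \<le> 0"
    using Vu by (intro nonpos) (simp add: uminus_blinfun.rep_eq)
  then show ?thesis
    using nonpos[OF Vu] by (simp add: blinfun.minus_right)
qed

lemma smooth_point_if_norming_points_subset:
  fixes S :: "'a::real_normed_vector \<Rightarrow>\<^sub>L 'b::real_normed_vector"
  assumes cpt: "compact (sphere (0::'a) 1)" and sy: "smooth_space TYPE('b)"
    and nS: "norm S = 1" and u: "u \<in> norming_points S"
    and norming: "norming_points S \<subseteq> {u, -u}"
  shows "smooth_point S"
proof -
  have unit: "norm u = 1" "norm (S u) = 1"
    using u nS by (auto simp: norming_points_def)
  obtain g :: "'b \<Rightarrow>\<^sub>L real" where g: "norm g = 1" "g (S u) = 1"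
    and g_unique: "\<And>k. norm k = 1 \<Longrightarrow> blinfun_apply k (S u) = 1 \<Longrightarrow> k = g"
    using smooth_space_unique_support[OF sy unit(2)] unfolding Ex1_def by blast
  have "G = eval_functional g u" if G: "norm G = 1" "G S = norm S" for G :: "('a \<Rightarrow>\<^sub>L 'b) \<Rightarrow>\<^sub>L real"
  proof -
    define \<psi> where "\<psi> = g o\<^sub>L S"
    have n\<psi>: "norm \<psi> \<le> 1"
      using norm_blinfun_compose[of g S] g nS by (simp add: \<psi>_def)
    have \<psi>u: "\<psi> u = 1"
      using g by (simp add: \<psi>_def)
    txt \<open>Since \<open>G\<close> kills every operator vanishing at \<open>u\<close>, it factors through evaluation at \<open>u\<close>.\<close>
    define k where "k = Blinfun (\<lambda>y. G (rank_one \<psi> y))"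
    have "bounded_linear (\<lambda>y. G (rank_one \<psi> y))"
      by (rule bounded_linear_compose[OF blinfun.bounded_linear_right bounded_linear_rank_one])
    then have k_apply: "k y = G (rank_one \<psi> y)" for y
      by (simp add: k_def bounded_linear_Blinfun_apply)
    have Gk: "G V = k (V u)" for V :: "'a \<Rightarrow>\<^sub>L 'b"
    proof -
      have "(V - rank_one \<psi> (V u)) u = 0"
        using \<psi>u by (simp add: minus_blinfun.rep_eq)
      then have "G (V - rank_one \<psi> (V u)) = 0"
        using support_functional_vanishes[OF cpt nS norming] G nS by simp
      then show ?thesis
        by (simp add: k_apply blinfun.diff_right)
    qed
    have "norm k \<le> 1"
    proof (rule norm_blinfun_bound)
      fix y
      have "norm (k y) \<le> norm (rank_one \<psi> y)"
        using norm_blinfun[of G "rank_one \<psi> y"] G(1) by (simp add: k_apply)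
      also have "\<dots> \<le> norm \<psi> * norm y"
        by (rule norm_rank_one_le)
      also have "\<dots> \<le> 1 * norm y"
        using n\<psi> by (intro mult_right_mono) auto
      finally show "norm (k y) \<le> 1 * norm y" .
    qed simp
    moreover have "k (S u) = 1"
      using Gk[of S] G nS by simp
    ultimately have "k = g"
      using norm_eq_1_if_attained[of k "S u"] unit by (intro g_unique) auto
    then show ?thesis
      by (intro blinfun_eqI) (simp add: Gk)
  qed
  then show ?thesis
    using eval_functional_supports[OF nS u g] nS unfolding smooth_point_def by (metis zero_neq_one norm_zero)
qed

lemma uniform_BPB_approx_if_norming_point_shared:
  fixes T A :: "'a::real_normed_vector \<Rightarrow>\<^sub>L 'b::real_normed_vector"
  assumes cpt: "compact (sphere (0::'a) 1)" and nT: "norm T = 1"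
    and norming: "norming_points T \<subseteq> {x0, -x0}"
    and nA: "norm A = 1" and x0: "x0 \<in> norming_points A" and AT: "norm (A - T) < \<epsilon>"
  shows "uniform_BPB_approx \<epsilon> T A"
proof -
  have "\<epsilon> > 0"
    using AT norm_ge_zero[of "A - T"] by linarith
  then obtain \<rho> where "\<rho> > 0" and \<rho>:
    "\<forall>x\<in>sphere 0 1. norm (T x) > 1 - \<rho> \<longrightarrow> norm (x - x0) < \<epsilon> \<or> norm (x + x0) < \<epsilon>"
    using near_norming_points_close[OF cpt nT norming] by blast
  have "x0 \<in> sphere 0 1" "norm (A x0) = 1" "- x0 \<in> sphere 0 1" "norm (A (- x0)) = 1"
    using x0 nA by (auto simp: norming_points_def blinfun.minus_right)
  moreover have "norm (x0 - x) = norm (x - x0)" "norm (- x0 - x) = norm (x + x0)" for x :: 'a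
    by (simp_all add: norm_minus_commute flip: norm_minus_cancel[of "x + x0"])
  ultimately show ?thesis
    unfolding uniform_BPB_approx_def using nA AT \<rho> \<open>\<rho> > 0\<close> by metis
qed

lemma convex_combination_norming_points:
  fixes T R :: "'a::real_normed_vector \<Rightarrow>\<^sub>L 'b::real_normed_vector"
  assumes nT: "norm T = 1" and nR: "norm R \<le> 1" and x0: "x0 \<in> norming_points T"
    and "R x0 = T x0" and t: "0 \<le> t" "t < 1"
  defines "A \<equiv> (1 - t) *\<^sub>R T + t *\<^sub>R R"
  shows "norm A = 1" "x0 \<in> norming_points A" "norming_points A \<subseteq> norming_points T"
proof -
  have A_apply: "A x = (1 - t) *\<^sub>R T x + t *\<^sub>R R x" for x
    by (simp add: A_def plus_blinfun.rep_eq scaleR_blinfun.rep_eq)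
  have unit: "norm x0 = 1" "norm (T x0) = 1"
    using x0 nT by (auto simp: norming_points_def)
  have "A x0 = T x0"
    using \<open>R x0 = T x0\<close> by (simp add: A_apply algebra_simps)
  have "norm A \<le> (1 - t) * norm T + t * norm R"
    using norm_triangle_ineq[of "(1 - t) *\<^sub>R T" "t *\<^sub>R R"] t by (simp add: A_def)
  also have "\<dots> \<le> 1"
    using nT nR t by (simp add: mult_left_le)
  finally show "norm A = 1"
    using norm_eq_1_if_attained[of A x0] \<open>A x0 = T x0\<close> unit by simp
  then show "x0 \<in> norming_points A"
    using \<open>A x0 = T x0\<close> x0 nT by (simp add: norming_points_def)
  show "norming_points A \<subseteq> norming_points T"
  proof
    fix x assume "x \<in> norming_points A"
    then have x: "norm x = 1" "norm (A x) = 1"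
      using \<open>norm A = 1\<close> by (auto simp: norming_points_def)
    have "1 \<le> (1 - t) * norm (T x) + t * norm (R x)"
      using norm_triangle_ineq[of "(1 - t) *\<^sub>R T x" "t *\<^sub>R R x"] x t by (simp add: A_apply)
    also have "\<dots> \<le> (1 - t) * norm (T x) + t"
      using norm_blinfun[of R x] nR x t by (simp add: mult_left_le)
    finally have "(1 - t) * 1 \<le> (1 - t) * norm (T x)"
      by simp
    then have "1 \<le> norm (T x)"
      using t by (simp add: mult_le_cancel_left_pos)
    then show "x \<in> norming_points T"
      using norm_blinfun[of T x] nT x by (simp add: norming_points_def)
  qed
qed

lemma exists_not_in_span_singleton:
  assumes "dim (UNIV::'a::real_normed_vector set) > 1"
  shows "\<exists>z::'a. z \<notin> span {y}"
proof (rule ccontr)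
  assume "\<not> (\<exists>z::'a. z \<notin> span {y})"
  then have "dim (UNIV::'a set) \<le> card {y}"
    by (intro dim_le_card) auto
  then show False
    using assms by simp
qed

lemma exists_unit_vector_near:
  fixes y :: "'a::real_normed_vector"
  assumes "dim (UNIV::'a set) > 1" "norm y = 1" "\<epsilon> > 0"
  shows "\<exists>w. norm w = 1 \<and> w \<noteq> y \<and> norm (w - y) < \<epsilon>"
proof -
  obtain z where z: "z \<notin> span {y}"
    using exists_not_in_span_singleton[OF assms(1)] by blast
  have no_multiple: "s *\<^sub>R z \<notin> span {y}" if "s \<noteq> 0" for s
    using z span_scale[of "s *\<^sub>R z" "{y}" "1 / s"] that by auto
  have nonzero: "y + s *\<^sub>R z \<noteq> 0" for s
  proof (cases "s = 0")
    case False
    have "- y \<in> span {y}"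
      by (simp add: span_base span_neg)
    then show ?thesis
      using no_multiple[OF False] by (metis add.inverse_unique)
  qed (use assms(2) in auto)
  define p where "p s = (1 / norm (y + s *\<^sub>R z)) *\<^sub>R (y + s *\<^sub>R z)" for s :: real
  have "continuous (at 0) p"
    unfolding p_def using nonzero[of 0] by (intro continuous_intros) auto
  moreover have "p 0 = y"
    using assms(2) by (simp add: p_def)
  ultimately obtain d where "d > 0" and d: "\<And>s. dist s 0 < d \<Longrightarrow> dist (p s) y < \<epsilon>"
    using assms(3) unfolding continuous_at_eps_delta by metis
  have "p (d / 2) \<noteq> y"
  proof
    define v where "v = y + (d / 2) *\<^sub>R z"
    assume "p (d / 2) = y"
    then have "norm v *\<^sub>R y = norm v *\<^sub>R ((1 / norm v) *\<^sub>R v)"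
      by (simp add: p_def flip: v_def)
    then have "v = norm v *\<^sub>R y"
      using nonzero[of "d / 2"] by (simp add: v_def)
    then have "(d / 2) *\<^sub>R z = (norm v - 1) *\<^sub>R y"
      by (simp add: v_def algebra_simps)
    then show False
      using no_multiple[of "d / 2"] \<open>d > 0\<close> by (simp add: span_base span_scale)
  qed
  moreover have "norm (p (d / 2)) = 1"
    using nonzero[of "d / 2"] by (simp add: p_def)
  moreover have "norm (p (d / 2) - y) < \<epsilon>"
    using d[of "d / 2"] \<open>d > 0\<close> by (simp add: dist_norm)
  ultimately show ?thesis
    by blast
qed

lemma norm_blinfun_eq_if_norm_apply_eq:
  fixes A :: "'a::real_normed_vector \<Rightarrow>\<^sub>L 'b::real_normed_vector"
    and B :: "'a \<Rightarrow>\<^sub>L 'c::real_normed_vector"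
  assumes "\<And>x. norm (A x) = norm (B x)"
  shows "norm A = norm B"
  unfolding norm_blinfun.rep_eq onorm_def using assms by simp

lemma exists_approx_sharing_norming_point:
  fixes T :: "'a::real_normed_vector \<Rightarrow>\<^sub>L 'b::real_normed_vector"
  assumes sy: "smooth_space TYPE('b)" and dim: "dim (UNIV::'b set) > 1"
    and nT: "norm T = 1" and x0: "x0 \<in> norming_points T" and "\<epsilon> > 0"
  shows "\<exists>A. A \<noteq> T \<and> norm A = 1 \<and> norm (A - T) < \<epsilon> \<and>
    x0 \<in> norming_points A \<and> norming_points A \<subseteq> norming_points T"
proof -
  define y0 where "y0 = T x0"
  have "norm y0 = 1"
    using x0 nT by (simp add: y0_def norming_points_def)
  then obtain g :: "'b \<Rightarrow>\<^sub>L real" where g: "norm g = 1" "g y0 = 1"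
    using smooth_space_unique_support[OF sy] by blast
  define \<psi> where "\<psi> = g o\<^sub>L T"
  have n\<psi>: "norm \<psi> \<le> 1"
    using norm_blinfun_compose[of g T] g nT by (simp add: \<psi>_def)
  have "\<psi> x0 = 1"
    using g by (simp add: \<psi>_def y0_def)
  define R where "R = rank_one \<psi> y0"
  show ?thesis
  proof (cases "R = T")
    case False
    define t where "t = min (1 / 2) (\<epsilon> / (2 * norm (R - T)))"
    have t: "0 < t" "t < 1" "t * norm (R - T) < \<epsilon>"
      using False \<open>\<epsilon> > 0\<close> by (auto simp: t_def min_def field_simps)
    define A where "A = (1 - t) *\<^sub>R T + t *\<^sub>R R"
    have "A - T = t *\<^sub>R (R - T)"
      by (simp add: A_def algebra_simps)
    moreover have "norm R \<le> 1"
      using norm_rank_one_le[of \<psi> y0] n\<psi> \<open>norm y0 = 1\<close> by (simp add: R_def)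
    moreover have "R x0 = T x0"
      using \<open>\<psi> x0 = 1\<close> by (simp add: R_def y0_def)
    ultimately show ?thesis
      using convex_combination_norming_points[OF nT _ x0, of R t] False t
      by (intro exI[of _ A]) (auto simp: A_def)
  next
    case True
    txt \<open>Moving \<open>T\<close> towards \<open>R\<close> does nothing now, so rotate the range vector \<open>y0\<close> instead.\<close>
    have T_eq: "T = rank_one \<psi> y0"
      using True by (simp add: R_def)
    obtain w where w: "norm w = 1" "w \<noteq> y0" "norm (w - y0) < \<epsilon>"
      using exists_unit_vector_near[OF dim \<open>norm y0 = 1\<close> \<open>\<epsilon> > 0\<close>] by blast
    define A where "A = rank_one \<psi> w"
    have same_norms: "norm (A x) = norm (T x)" for x
      using w(1) \<open>norm y0 = 1\<close> by (simp add: A_def T_eq)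
    then have "norm A = norm T"
      by (rule norm_blinfun_eq_if_norm_apply_eq)
    then have "norming_points A = norming_points T"
      by (simp add: norming_points_def same_norms)
    moreover have "norm (A - T) < \<epsilon>"
    proof -
      have "norm (A - T) = norm (rank_one \<psi> (w - y0))"
        by (simp add: A_def T_eq rank_one_diff)
      also have "\<dots> \<le> norm (w - y0)"
        using norm_rank_one_le[of \<psi> "w - y0"] n\<psi> mult_right_mono[OF n\<psi> norm_ge_zero[of "w - y0"]]
        by simp
      finally show ?thesis
        using w(3) by simp
    qed
    moreover have "A x0 \<noteq> T x0"
      using w(2) \<open>\<psi> x0 = 1\<close> by (simp add: A_def y0_def)
    ultimately show ?thesis
      using \<open>norm A = norm T\<close> nT x0 by auto
  qed
qed

lemma norming_points_close_if_smooth_BPB_approx: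
  fixes T A :: "'a::real_normed_vector \<Rightarrow>\<^sub>L 'b::real_normed_vector"
  assumes sc: "strictly_convex_space TYPE('a)" and sy: "smooth_space TYPE('b)"
    and nT: "norm T = 1" and approx: "uniform_BPB_approx \<epsilon> T A" and smooth: "smooth_point A"
    and x: "x \<in> norming_points T" and x': "x' \<in> norming_points T"
  shows "norm (x - x') < 2 * \<epsilon> \<or> norm (x + x') < 2 * \<epsilon>"
proof -
  obtain \<delta> where nA: "norm A = 1" and "\<delta> > 0" and BPB:
    "\<And>y. y \<in> sphere 0 1 \<Longrightarrow> norm (T y) > 1 - \<delta> \<Longrightarrow>
       \<exists>u\<in>sphere 0 1. norm (A u) = 1 \<and> norm (u - y) < \<epsilon>"
    using approx unfolding uniform_BPB_approx_def by blast
  obtain u where "u \<in> norming_points A" "norm (u - x) < \<epsilon>"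
    using BPB[of x] x nT nA \<open>\<delta> > 0\<close> by (auto simp: norming_points_def)
  moreover obtain u' where "u' \<in> norming_points A" "norm (u' - x') < \<epsilon>"
    using BPB[of x'] x' nT nA \<open>\<delta> > 0\<close> by (auto simp: norming_points_def)
  ultimately have "u' = u \<or> u' = - u" "norm (x - u) < \<epsilon>" "norm (x' - u') < \<epsilon>"
    using norming_points_subset_if_smooth_point[OF sc sy smooth nA] by (auto simp: norm_minus_commute)
  moreover have "norm (x - x') \<le> norm (x - u) + norm (x' - u)"
    using norm_triangle_ineq4[of "x - u" "x' - u"] by simp
  moreover have "norm (x + x') \<le> norm (x - u) + norm (x' + u)"
    using norm_triangle_ineq[of "x - u" "x' + u"] by simp
  ultimately show ?thesis
    by auto
qed

lemma norming_points_subset_if_smooth_approximable: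
  fixes T :: "'a::real_normed_vector \<Rightarrow>\<^sub>L 'b::real_normed_vector"
  assumes sc: "strictly_convex_space TYPE('a)" and sy: "smooth_space TYPE('b)"
    and nT: "norm T = 1" and x0: "x0 \<in> norming_points T"
    and approx: "\<forall>\<epsilon>>0. \<exists>A. uniform_BPB_approx \<epsilon> T A \<and> smooth_point A"
  shows "norming_points T \<subseteq> {x0, -x0}"
proof
  fix x assume x: "x \<in> norming_points T"
  show "x \<in> {x0, -x0}"
  proof (rule ccontr)
    assume "x \<notin> {x0, -x0}"
    define \<eta> where "\<eta> = min (norm (x - x0)) (norm (x + x0))"
    have "\<eta> > 0"
      using \<open>x \<notin> {x0, -x0}\<close> by (auto simp: \<eta>_def add_eq_0_iff2)
    then obtain A where "uniform_BPB_approx (\<eta> / 2) T A" "smooth_point A"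
      using approx by (meson half_gt_zero)
    then show False
      using norming_points_close_if_smooth_BPB_approx[OF sc sy nT _ _ x x0]
      by (fastforce simp: \<eta>_def)
  qed
qed

theorem theorem2p8:
  fixes T :: "'a::banach \<Rightarrow>\<^sub>L 'b::banach"
  assumes "fin_dim_space TYPE('a)" and "fin_dim_space TYPE('b)"
    and "dim (UNIV::'a set) > 1" and "dim (UNIV::'b set) > 1"
    and "strictly_convex_space TYPE('a)" and "smooth_space TYPE('b)"
    and "norm T = 1"
  shows "smooth_point T \<longleftrightarrow>
    (\<forall>\<epsilon>>0. \<exists>A. uniform_BPB_approx \<epsilon> T A \<and> A \<noteq> T \<and> smooth_point A)"
proof -
  have cpt: "compact (sphere (0::'a) 1)"
    using assms(1) by (rule compact_unit_sphere)
  obtain z :: 'a where "z \<notin> span {0}"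
    using exists_not_in_span_singleton[OF assms(3)] by blast
  then have "(1 / norm z) *\<^sub>R z \<in> sphere 0 1"
    by simp
  then obtain x0 where x0: "x0 \<in> norming_points T"
    using norming_points_nonempty[OF cpt, of T] by blast
  show ?thesis
  proof
    assume "smooth_point T"
    then have norming: "norming_points T \<subseteq> {x0, -x0}"
      by (rule norming_points_subset_if_smooth_point[OF assms(5,6) _ assms(7) x0])
    show "\<forall>\<epsilon>>0. \<exists>A. uniform_BPB_approx \<epsilon> T A \<and> A \<noteq> T \<and> smooth_point A"
    proof (intro allI impI)
      fix \<epsilon> :: real assume "\<epsilon> > 0"
      then obtain A where A: "A \<noteq> T" "norm A = 1" "norm (A - T) < \<epsilon>"
        "x0 \<in> norming_points A" "norming_points A \<subseteq> norming_points T"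
        using exists_approx_sharing_norming_point[OF assms(6,4,7) x0] by blast
      have "smooth_point A"
        using smooth_point_if_norming_points_subset[OF cpt assms(6) A(2,4)] A(5) norming by blast
      moreover have "uniform_BPB_approx \<epsilon> T A"
        by (rule uniform_BPB_approx_if_norming_point_shared[OF cpt assms(7) norming A(2,4,3)])
      ultimately show "\<exists>A. uniform_BPB_approx \<epsilon> T A \<and> A \<noteq> T \<and> smooth_point A"
        using A(1) by blast
    qed
  next
    assume "\<forall>\<epsilon>>0. \<exists>A. uniform_BPB_approx \<epsilon> T A \<and> A \<noteq> T \<and> smooth_point A"
    then have "norming_points T \<subseteq> {x0, -x0}"
      using norming_points_subset_if_smooth_approximable[OF assms(5,6,7) x0] by blast
    then show "smooth_point T"
      by (rule smooth_point_if_norming_points_subset[OF cpt assms(6,7) x0])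
  qed
qed

end
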